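(* Consider a vertex model on the (periodic) hexagonal lattice in which every vertex has the same signature $r=(x_1,\dots,x_8)$. For a generic choice of $r$ (i.e. outside a proper algebraic subset of signatures), the model is realizable if and only if it is orthogonally realizable.
   Context: Signatures are vectors indexed by local configurations $000,001,\dots,111$ of the incident $(a,b,c)$-edges. A realization assigns to each edge $e$ an invertible $2\times2$ matrix $T_e$ and to each vertex a matchgate signature $m_v$ with $m_v=(T_a\otimes T_b\otimes T_c)r_v$ at black vertices and $m_v=((T_a\otimes T_b\otimes T_c)^t)^{-1}r_v$ at white vertices, every $m_v$ satisfying the parity constraint (vanishing on all binary strings of one parity); the model is realizable if a realization exists, and orthogonally realizable if a realization exists with all $T_e$ orthogonal. *)

theory Defs
  imports Complex_Main
begin

text \<open>2x2 complex matrices, indexed by bool (False = 0, True = 1); entry T i j is row i, column j.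
  Local signatures at a trivalent vertex are functions of the configuration (a,b,c) of bits
  on the incident a-, b-, c-edges.\<close>

type_synonym mat2 = "bool \<Rightarrow> bool \<Rightarrow> complex"
type_synonym sig3 = "bool \<Rightarrow> bool \<Rightarrow> bool \<Rightarrow> complex"

definition mat2_mult :: "mat2 \<Rightarrow> mat2 \<Rightarrow> mat2" where
  "mat2_mult S T = (\<lambda>i k. \<Sum>j\<in>UNIV. S i j * T j k)"

definition mat2_id :: mat2 where
  "mat2_id = (\<lambda>i j. if i = j then 1 else 0)"

definition mat2_transpose :: "mat2 \<Rightarrow> mat2" where
  "mat2_transpose T = (\<lambda>i j. T j i)"

definition mat2_invertible :: "mat2 \<Rightarrow> bool" where
  "mat2_invertible T \<longleftrightarrow> (\<exists>S. mat2_mult T S = mat2_id \<and> mat2_mult S T = mat2_id)"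

definition mat2_orthogonal :: "mat2 \<Rightarrow> bool" where
  "mat2_orthogonal T \<longleftrightarrow> mat2_mult (mat2_transpose T) T = mat2_id \<and> mat2_mult T (mat2_transpose T) = mat2_id"

text \<open>(Ta \<otimes> Tb \<otimes> Tc) applied to a signature (configurations ordered 000,...,111 with the a-bit most
  significant, which is exactly the Kronecker ordering).\<close>
definition tensor3_apply :: "mat2 \<Rightarrow> mat2 \<Rightarrow> mat2 \<Rightarrow> sig3 \<Rightarrow> sig3" where
  "tensor3_apply Ta Tb Tc r = (\<lambda>x y z. \<Sum>x'\<in>UNIV. \<Sum>y'\<in>UNIV. \<Sum>z'\<in>UNIV.
      Ta x x' * Tb y y' * Tc z z' * r x' y' z')"

definition weight3 :: "bool \<Rightarrow> bool \<Rightarrow> bool \<Rightarrow> nat" where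
  "weight3 x y z = of_bool x + of_bool y + of_bool z"

definition parity_ok :: "sig3 \<Rightarrow> bool" where
  "parity_ok m \<longleftrightarrow> (\<forall>x y z. even (weight3 x y z) \<longrightarrow> m x y z = 0)
                 \<or> (\<forall>x y z. odd (weight3 x y z) \<longrightarrow> m x y z = 0)"

text \<open>Periodic hexagonal lattice of size m x n on the torus.
  Black vertices (i,j) and white vertices (i,j), i < m, j < n.
  Edges are named by their direction and their black endpoint:
  black (i,j) -- white (i,j)       is the a-edge (A,i,j),
  black (i,j) -- white (i+1 mod m,j) is the b-edge (B,i,j),
  black (i,j) -- white (i,j+1 mod n) is the c-edge (C,i,j).
  Hence white (i,j) has a-edge (A,i,j), b-edge (B,i-1 mod m,j), c-edge (C,i,j-1 mod n).\<close>

datatype dir = DA | DB | DC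

type_synonym edge_assignment = "dir \<Rightarrow> nat \<Rightarrow> nat \<Rightarrow> mat2"

definition black_ok :: "edge_assignment \<Rightarrow> sig3 \<Rightarrow> nat \<Rightarrow> nat \<Rightarrow> bool" where
  "black_ok T r i j \<longleftrightarrow> parity_ok (tensor3_apply (T DA i j) (T DB i j) (T DC i j) r)"

text \<open>At a white vertex m_v = ((Ta \<otimes> Tb \<otimes> Tc)^t)^{-1} r, i.e. (Ta \<otimes> Tb \<otimes> Tc)^t m_v = r,
  and (Ta \<otimes> Tb \<otimes> Tc)^t = Ta^t \<otimes> Tb^t \<otimes> Tc^t.\<close>
definition white_ok :: "nat \<Rightarrow> nat \<Rightarrow> edge_assignment \<Rightarrow> sig3 \<Rightarrow> nat \<Rightarrow> nat \<Rightarrow> bool" where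
  "white_ok m n T r i j \<longleftrightarrow>
     (\<exists>mv. parity_ok mv \<and>
        tensor3_apply (mat2_transpose (T DA i j))
                      (mat2_transpose (T DB ((i + m - 1) mod m) j))
                      (mat2_transpose (T DC i ((j + n - 1) mod n))) mv = r)"

definition is_realization :: "nat \<Rightarrow> nat \<Rightarrow> sig3 \<Rightarrow> edge_assignment \<Rightarrow> bool" where
  "is_realization m n r T \<longleftrightarrow>
     (\<forall>d i j. i < m \<longrightarrow> j < n \<longrightarrow> mat2_invertible (T d i j)) \<and>
     (\<forall>i j. i < m \<longrightarrow> j < n \<longrightarrow> black_ok T r i j \<and> white_ok m n T r i j)"

definition hex_realizable :: "nat \<Rightarrow> nat \<Rightarrow> sig3 \<Rightarrow> bool" where
  "hex_realizable m n r \<longleftrightarrow> (\<exists>T. is_realization m n r T)"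

definition hex_orth_realizable :: "nat \<Rightarrow> nat \<Rightarrow> sig3 \<Rightarrow> bool" where
  "hex_orth_realizable m n r \<longleftrightarrow>
     (\<exists>T. is_realization m n r T \<and> (\<forall>d i j. i < m \<longrightarrow> j < n \<longrightarrow> mat2_orthogonal (T d i j)))"

text \<open>Polynomials in the 8 signature entries: a finite set S of exponent vectors
  e :: bool\<times>bool\<times>bool \<Rightarrow> nat (one exponent per entry) with coefficients c.
  Distinct exponent vectors give distinct monomials, so the polynomial is nonzero
  iff some coefficient on S is nonzero.\<close>
definition sig_poly_eval :: "((bool \<times> bool \<times> bool \<Rightarrow> nat) \<Rightarrow> complex) \<Rightarrow> (bool \<times> bool \<times> bool \<Rightarrow> nat) set \<Rightarrow> sig3 \<Rightarrow> complex" where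
  "sig_poly_eval c S r = (\<Sum>e\<in>S. c e * (\<Prod>v\<in>UNIV. (case v of (x, y, z) \<Rightarrow> r x y z) ^ e v))"

definition nonzero_sig_poly :: "((bool \<times> bool \<times> bool \<Rightarrow> nat) \<Rightarrow> complex) \<Rightarrow> (bool \<times> bool \<times> bool \<Rightarrow> nat) set \<Rightarrow> bool" where
  "nonzero_sig_poly c S \<longleftrightarrow> finite S \<and> (\<exists>e\<in>S. c e \<noteq> 0)"

end

theory Submission
  imports Defs
begin

(* For a signature s let Q(s) be the symmetric 2x2 form on the first leg obtained
   by contracting the two other legs of s with the symplectic form eps (x) eps.  Under the
   holographic transformation (A (x) B (x) C) it transforms as Q -> det B det C * A Q A^t, and it is
   diagonal whenever s satisfies the parity constraint.  Given a realization, look at an edge with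
   matrix A between a black and a white vertex.  The white vertex gives Q(r) = c * A^t D A with
   D diagonal, so tr Q(r) = c * tr (D A A^t); the black vertex says (A Q(r) A^t) is diagonal, and
   its off-diagonal entry equals c * h * tr (D A A^t), where h is the inner product of the two rows
   of A.  Hence if tr Q(r) is nonzero, the rows of A are orthogonal (for the b- and c-edges apply
   this to the rotated signatures).  Rescaling rows by nonzero factors preserves every parity
   constraint, so normalizing all rows yields an orthogonal realization.  The genericity condition
   is the nonvanishing of the polynomial  tr Q(r) * tr Q(rot r) * tr Q(rot (rot r)),  which is not
   identically zero (an explicit even signature is a witness). *)

subsection \<open>Polynomial functions of a signature\<close>

definition sig_monomial :: "(bool \<times> bool \<times> bool \<Rightarrow> nat) \<Rightarrow> sig3 \<Rightarrow> complex" where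
  "sig_monomial e r = (\<Prod>v\<in>UNIV. (case v of (x, y, z) \<Rightarrow> r x y z) ^ e v)"

lemma sig_poly_eval_monomials: "sig_poly_eval c S r = (\<Sum>e\<in>S. c e * sig_monomial e r)"
  by (simp add: sig_poly_eval_def sig_monomial_def)

lemma sig_monomial_add: "sig_monomial (\<lambda>v. a v + b v) r = sig_monomial a r * sig_monomial b r"
  unfolding sig_monomial_def by (simp add: power_add prod.distrib)

definition sig_polynomial :: "(sig3 \<Rightarrow> complex) \<Rightarrow> bool" where
  "sig_polynomial f \<longleftrightarrow> (\<exists>c S. finite S \<and> (\<forall>r. f r = sig_poly_eval c S r))"

lemma sig_polynomial_const: "sig_polynomial (\<lambda>r. k)"
  unfolding sig_polynomial_def sig_poly_eval_monomials
  by (intro exI[of _ "\<lambda>_. k"] exI[of _ "{\<lambda>_. 0}"]) (simp add: sig_monomial_def)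

lemma sig_polynomial_entry: "sig_polynomial (\<lambda>r. r x y z)"
proof -
  define e :: "bool \<times> bool \<times> bool \<Rightarrow> nat" where "e v = (if v = (x, y, z) then 1 else 0)" for v
  have "sig_monomial e r = (\<Prod>v\<in>UNIV. if v = (x, y, z) then (case v of (x, y, z) \<Rightarrow> r x y z) else 1)"
    for r unfolding sig_monomial_def e_def by (rule prod.cong) auto
  then have "sig_monomial e r = r x y z" for r by (simp add: prod.delta)
  then show ?thesis unfolding sig_polynomial_def sig_poly_eval_monomials
    by (intro exI[of _ "\<lambda>_. 1"] exI[of _ "{e}"]) simp
qed

lemma sig_polynomial_add:
  assumes "sig_polynomial f" "sig_polynomial g"
  shows "sig_polynomial (\<lambda>r. f r + g r)"
proof -
  obtain c1 S1 where S1: "finite S1" and f: "\<And>r. f r = (\<Sum>e\<in>S1. c1 e * sig_monomial e r)"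
    using assms(1) unfolding sig_polynomial_def sig_poly_eval_monomials by blast
  obtain c2 S2 where S2: "finite S2" and g: "\<And>r. g r = (\<Sum>e\<in>S2. c2 e * sig_monomial e r)"
    using assms(2) unfolding sig_polynomial_def sig_poly_eval_monomials by blast
  define c1' where "c1' e = (if e \<in> S1 then c1 e else 0)" for e
  define c2' where "c2' e = (if e \<in> S2 then c2 e else 0)" for e
  define c where "c e = c1' e + c2' e" for e
  have "f r = (\<Sum>e\<in>S1 \<union> S2. c1' e * sig_monomial e r)" for r
    unfolding f c1'_def by (rule sum.mono_neutral_cong_left) (use S1 S2 in auto)
  moreover have "g r = (\<Sum>e\<in>S1 \<union> S2. c2' e * sig_monomial e r)" for r
    unfolding g c2'_def by (rule sum.mono_neutral_cong_left) (use S1 S2 in auto)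
  ultimately have "f r + g r = (\<Sum>e\<in>S1 \<union> S2. c e * sig_monomial e r)" for r
    by (simp add: c_def distrib_right sum.distrib)
  then show ?thesis unfolding sig_polynomial_def sig_poly_eval_monomials using S1 S2 by blast
qed

lemma sig_polynomial_mult:
  assumes "sig_polynomial f" "sig_polynomial g"
  shows "sig_polynomial (\<lambda>r. f r * g r)"
proof -
  obtain c1 S1 where S1: "finite S1" and f: "\<And>r. f r = (\<Sum>e\<in>S1. c1 e * sig_monomial e r)"
    using assms(1) unfolding sig_polynomial_def sig_poly_eval_monomials by blast
  obtain c2 S2 where S2: "finite S2" and g: "\<And>r. g r = (\<Sum>e\<in>S2. c2 e * sig_monomial e r)"
    using assms(2) unfolding sig_polynomial_def sig_poly_eval_monomials by blast
  text \<open>Products of monomials are monomials with added exponents; collect equal ones.\<close>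
  define h where "h p = (\<lambda>v. fst p v + snd p v)"
    for p :: "(bool \<times> bool \<times> bool \<Rightarrow> nat) \<times> (bool \<times> bool \<times> bool \<Rightarrow> nat)"
  define c where "c e = (\<Sum>p\<in>{p\<in>S1 \<times> S2. h p = e}. c1 (fst p) * c2 (snd p))" for e
  have fin: "finite (S1 \<times> S2)" using S1 S2 by simp
  have "f r * g r = (\<Sum>e\<in>h ` (S1 \<times> S2). c e * sig_monomial e r)" for r
  proof -
    have "f r * g r = (\<Sum>p\<in>S1 \<times> S2. c1 (fst p) * c2 (snd p) * sig_monomial (h p) r)"
      unfolding f g sum_product sum.cartesian_product h_def sig_monomial_add
      by (rule sum.cong) (auto simp: algebra_simps)
    also have "\<dots> = (\<Sum>e\<in>h ` (S1 \<times> S2).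
        \<Sum>p\<in>{p\<in>S1 \<times> S2. h p = e}. c1 (fst p) * c2 (snd p) * sig_monomial (h p) r)"
      by (rule sum.image_gen[OF fin])
    also have "\<dots> = (\<Sum>e\<in>h ` (S1 \<times> S2). c e * sig_monomial e r)"
      unfolding c_def sum_distrib_right by (rule sum.cong) auto
    finally show ?thesis .
  qed
  then show ?thesis unfolding sig_polynomial_def sig_poly_eval_monomials using fin by blast
qed

lemma sig_polynomial_sum:
  assumes "finite I" "\<And>i. sig_polynomial (f i)"
  shows "sig_polynomial (\<lambda>r. \<Sum>i\<in>I. f i r)"
  using assms(1)
  by (induction I rule: finite_induct) (auto intro: sig_polynomial_const sig_polynomial_add assms(2))

lemma sig_polynomial_nonzero:
  assumes "sig_polynomial f" "f r0 \<noteq> 0"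
  shows "\<exists>c S. nonzero_sig_poly c S \<and> (\<forall>r. f r = sig_poly_eval c S r)"
proof -
  obtain c S where S: "finite S" and f: "\<And>r. f r = sig_poly_eval c S r"
    using assms(1) unfolding sig_polynomial_def by blast
  have "\<exists>e\<in>S. c e \<noteq> 0"
  proof (rule ccontr)
    assume "\<not> (\<exists>e\<in>S. c e \<noteq> 0)"
    then have "sig_poly_eval c S r0 = 0" unfolding sig_poly_eval_monomials by simp
    with assms(2) f show False by simp
  qed
  with S f show ?thesis unfolding nonzero_sig_poly_def by blast
qed

definition det2 :: "mat2 \<Rightarrow> complex" where
  "det2 A = A False False * A True True - A False True * A True False"

definition row_scale :: "(bool \<Rightarrow> complex) \<Rightarrow> mat2 \<Rightarrow> mat2" where
  "row_scale w A = (\<lambda>i k. w i * A i k)"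

lemma det2_mult: "det2 (mat2_mult A B) = det2 A * det2 B"
  unfolding det2_def mat2_mult_def by (simp add: UNIV_bool algebra_simps)

lemma det2_id: "det2 mat2_id = 1"
  by (simp add: det2_def mat2_id_def)

lemma det2_row_scale: "det2 (row_scale w A) = w False * w True * det2 A"
  unfolding det2_def row_scale_def by (simp add: algebra_simps)

lemma mat2_right_inverse_is_left_inverse:
  "mat2_mult A B = mat2_id \<Longrightarrow> mat2_mult B A = mat2_id"
  unfolding mat2_mult_def mat2_id_def by (simp add: fun_eq_iff UNIV_bool all_bool_eq) algebra

definition adj2 :: "mat2 \<Rightarrow> mat2" where
  "adj2 A i k = (if i = k then A (\<not> i) (\<not> k) else - A i k)"

lemma mat2_mult_adj2: "mat2_mult A (adj2 A) = (\<lambda>i k. if i = k then det2 A else 0)"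
  unfolding mat2_mult_def adj2_def det2_def by (simp add: fun_eq_iff UNIV_bool)

lemma mat2_invertible_iff_det2: "mat2_invertible A \<longleftrightarrow> det2 A \<noteq> 0"
proof
  assume "mat2_invertible A"
  then obtain S where "mat2_mult A S = mat2_id" unfolding mat2_invertible_def by blast
  then have "det2 A * det2 S = 1" by (metis det2_mult det2_id)
  then show "det2 A \<noteq> 0" by auto
next
  assume "det2 A \<noteq> 0"
  then have "mat2_mult A (\<lambda>i k. adj2 A i k / det2 A) = mat2_id"
    using mat2_mult_adj2[of A] unfolding mat2_mult_def mat2_id_def
    by (simp add: fun_eq_iff sum_divide_distrib [symmetric])
  then show "mat2_invertible A"
    unfolding mat2_invertible_def by (blast intro: mat2_right_inverse_is_left_inverse)
qed

text \<open>The two rows of A are orthogonal for the (non-Hermitian) bilinear form x\<cdot>y.\<close>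
definition rows_orthogonal :: "mat2 \<Rightarrow> bool" where
  "rows_orthogonal A \<longleftrightarrow> A False False * A True False + A False True * A True True = 0"

definition row_norm :: "mat2 \<Rightarrow> bool \<Rightarrow> complex" where
  "row_norm A i = A i False * A i False + A i True * A i True"

definition normalize_rows :: "mat2 \<Rightarrow> mat2" where
  "normalize_rows A = row_scale (\<lambda>i. 1 / csqrt (row_norm A i)) A"

text \<open>For orthogonal rows the Gram determinant is det(A)^2, so no row has zero norm.\<close>
lemma row_norm_nonzero:
  assumes "det2 A \<noteq> 0" "rows_orthogonal A"
  shows "row_norm A i \<noteq> 0"
proof -
  have "row_norm A False * row_norm A True
      = det2 A * det2 A + (A False False * A True False + A False True * A True True)^2"
    unfolding row_norm_def det2_def by (simp add: algebra_simps power2_eq_square)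
  then have "row_norm A False * row_norm A True = det2 A * det2 A"
    using assms(2) unfolding rows_orthogonal_def by simp
  then show ?thesis using assms(1) by (cases i) auto
qed

lemma normalize_rows_orthogonal:
  assumes det: "det2 A \<noteq> 0" and orth: "rows_orthogonal A"
  shows "mat2_orthogonal (normalize_rows A)"
proof -
  define g where "g i = 1 / csqrt (row_norm A i)" for i
  define N where "N = normalize_rows A"
  have unit: "g i * g i * row_norm A i = 1" for i
  proof -
    have "csqrt (row_norm A i) * csqrt (row_norm A i) = row_norm A i"
      using power2_csqrt[of "row_norm A i"] by (simp add: power2_eq_square)
    then show ?thesis using row_norm_nonzero[OF det orth, of i] unfolding g_def by simp
  qed
  have entry: "mat2_mult N (mat2_transpose N) i k
      = g i * g k * (A i False * A k False + A i True * A k True)" for i k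
    unfolding N_def normalize_rows_def row_scale_def mat2_mult_def mat2_transpose_def g_def
    by (simp add: UNIV_bool algebra_simps)
  have "mat2_mult N (mat2_transpose N) i k = mat2_id i k" for i k
    using unit[of i] orth unfolding entry mat2_id_def row_norm_def rows_orthogonal_def
    by (cases i; cases k) (simp_all add: algebra_simps)
  then have "mat2_mult N (mat2_transpose N) = mat2_id" by blast
  then show ?thesis unfolding N_def
    unfolding mat2_orthogonal_def by (auto intro: mat2_right_inverse_is_left_inverse)
qed

definition rotate_legs :: "sig3 \<Rightarrow> sig3" where
  "rotate_legs s = (\<lambda>x y z. s y z x)"

lemma rotate_legs_tensor:
  "rotate_legs (tensor3_apply A B C s) = tensor3_apply C A B (rotate_legs s)"
  unfolding rotate_legs_def tensor3_apply_def by (rule ext)+ (simp add: UNIV_bool algebra_simps)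

lemma parity_ok_rotate_legs: "parity_ok (rotate_legs s) \<longleftrightarrow> parity_ok s"
proof -
  have w: "weight3 y z x = weight3 x y z" for x y z by (simp add: weight3_def)
  show ?thesis unfolding parity_ok_def rotate_legs_def by (metis w)
qed

lemma parity_ok_scale: "parity_ok s \<Longrightarrow> parity_ok (\<lambda>x y z. f x y z * s x y z)"
  unfolding parity_ok_def by auto

lemma tensor_row_scale:
  "tensor3_apply (row_scale wa A) (row_scale wb B) (row_scale wc C) s
     = (\<lambda>x y z. wa x * wb y * wc z * tensor3_apply A B C s x y z)"
  unfolding tensor3_apply_def row_scale_def by (rule ext)+ (simp add: UNIV_bool algebra_simps)

lemma tensor_transpose_row_scale:
  "tensor3_apply (mat2_transpose (row_scale wa A)) (mat2_transpose (row_scale wb B))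
       (mat2_transpose (row_scale wc C)) s
     = tensor3_apply (mat2_transpose A) (mat2_transpose B) (mat2_transpose C)
         (\<lambda>x y z. wa x * wb y * wc z * s x y z)"
  unfolding tensor3_apply_def mat2_transpose_def row_scale_def
  by (rule ext)+ (simp add: UNIV_bool algebra_simps)

subsection \<open>The quadratic form on the first leg\<close>

definition symp :: "bool \<Rightarrow> bool \<Rightarrow> complex" where
  "symp y y' = (if y = y' then 0 else if y then -1 else 1)"

definition leg_form :: "sig3 \<Rightarrow> mat2" where
  "leg_form s x x' = (\<Sum>y\<in>UNIV. \<Sum>y'\<in>UNIV. \<Sum>z\<in>UNIV. \<Sum>z'\<in>UNIV.
      s x y z * s x' y' z' * symp y y' * symp z z')"

definition leg_trace :: "sig3 \<Rightarrow> complex" where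
  "leg_trace s = leg_form s False False + leg_form s True True"

lemma leg_form_tensor:
  "leg_form (tensor3_apply A B C s) x x'
     = det2 B * det2 C * (\<Sum>i\<in>UNIV. \<Sum>j\<in>UNIV. A x i * A x' j * leg_form s i j)"
  unfolding leg_form_def tensor3_apply_def det2_def
  by (simp add: UNIV_bool symp_def algebra_simps)

text \<open>Each term of an off-diagonal entry pairs two entries of opposite parity.\<close>
lemma leg_form_parity:
  assumes "parity_ok s"
  shows "leg_form s False True = 0" "leg_form s True False = 0"
proof -
  have "leg_form s False True = 0 \<and> leg_form s True False = 0"
    using assms unfolding parity_ok_def
  proof
    assume even_zero: "\<forall>x y z. even (weight3 x y z) \<longrightarrow> s x y z = 0"
    have "s False False False = 0" "s False True True = 0" "s True False True = 0"
      "s True True False = 0"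
      by (rule even_zero[rule_format]; simp add: weight3_def)+
    then show ?thesis unfolding leg_form_def by (simp add: UNIV_bool symp_def)
  next
    assume odd_zero: "\<forall>x y z. odd (weight3 x y z) \<longrightarrow> s x y z = 0"
    have "s True True True = 0" "s True False False = 0" "s False True False = 0"
      "s False False True = 0"
      by (rule odd_zero[rule_format]; simp add: weight3_def)+
    then show ?thesis unfolding leg_form_def by (simp add: UNIV_bool symp_def)
  qed
  then show "leg_form s False True = 0" "leg_form s True False = 0" by auto
qed

subsection \<open>Orthogonality of the edge matrices\<close>

lemma first_leg_rows_orthogonal:
  assumes black: "parity_ok (tensor3_apply A B C r)"
    and white: "parity_ok mv" "tensor3_apply (mat2_transpose A) B' C' mv = r"
    and det: "det2 B \<noteq> 0" "det2 C \<noteq> 0"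
    and generic: "leg_trace r \<noteq> 0"
  shows "rows_orthogonal A"
proof -
  define c where "c = det2 B' * det2 C'"
  define Q where "Q = leg_form r"
  define D where "D = leg_form mv"
  define h where "h = A False False * A True False + A False True * A True True"
  define \<sigma> where "\<sigma> = D False False * row_norm A False + D True True * row_norm A True"
  have D_diag: "D False True = 0" "D True False = 0"
    using leg_form_parity[OF white(1)] unfolding D_def by auto
  have Q_white: "Q i j = c * (A False i * D False False * A False j + A True i * D True True * A True j)"
    for i j
    using leg_form_tensor[of "mat2_transpose A" B' C' mv i j] white(2) D_diag
    unfolding Q_def D_def c_def by (simp add: UNIV_bool mat2_transpose_def algebra_simps)
  have "(\<Sum>i\<in>UNIV. \<Sum>j\<in>UNIV. A False i * A True j * Q i j) = 0"
    using leg_form_tensor[of A B C r False True] leg_form_parity[OF black] det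
    unfolding Q_def by simp
  moreover have "(\<Sum>i\<in>UNIV. \<Sum>j\<in>UNIV. A False i * A True j * Q i j) = c * h * \<sigma>"
    unfolding Q_white h_def \<sigma>_def row_norm_def by (simp add: UNIV_bool algebra_simps)
  moreover have "leg_trace r = c * \<sigma>"
    unfolding leg_trace_def Q_def[symmetric] Q_white \<sigma>_def row_norm_def by (simp add: algebra_simps)
  ultimately show ?thesis
    using generic unfolding rows_orthogonal_def h_def by auto
qed

text \<open>The same for the b- and c-edges, by rotating the legs.\<close>
lemma second_leg_rows_orthogonal:
  assumes black: "parity_ok (tensor3_apply A B C r)"
    and white: "parity_ok mv" "tensor3_apply A' (mat2_transpose B) C' mv = r"
    and det: "det2 C \<noteq> 0" "det2 A \<noteq> 0"
    and generic: "leg_trace (rotate_legs (rotate_legs r)) \<noteq> 0"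
  shows "rows_orthogonal B"
proof (rule first_leg_rows_orthogonal[OF _ _ _ det generic])
  show "parity_ok (tensor3_apply B C A (rotate_legs (rotate_legs r)))"
    using black by (simp add: parity_ok_rotate_legs flip: rotate_legs_tensor)
  show "parity_ok (rotate_legs (rotate_legs mv))"
    using white(1) by (simp add: parity_ok_rotate_legs)
  show "tensor3_apply (mat2_transpose B) C' A' (rotate_legs (rotate_legs mv))
      = rotate_legs (rotate_legs r)"
    using white(2) by (simp flip: rotate_legs_tensor)
qed

lemma third_leg_rows_orthogonal:
  assumes black: "parity_ok (tensor3_apply A B C r)"
    and white: "parity_ok mv" "tensor3_apply A' B' (mat2_transpose C) mv = r"
    and det: "det2 A \<noteq> 0" "det2 B \<noteq> 0"
    and generic: "leg_trace (rotate_legs r) \<noteq> 0"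
  shows "rows_orthogonal C"
proof (rule first_leg_rows_orthogonal[OF _ _ _ det generic])
  show "parity_ok (tensor3_apply C A B (rotate_legs r))"
    using black by (simp add: parity_ok_rotate_legs flip: rotate_legs_tensor)
  show "parity_ok (rotate_legs mv)"
    using white(1) by (simp add: parity_ok_rotate_legs)
  show "tensor3_apply (mat2_transpose C) A' B' (rotate_legs mv) = rotate_legs r"
    using white(2) by (simp flip: rotate_legs_tensor)
qed

text \<open>The white vertex across the b-edge (B,i,j) is (i+1 mod m, j), whose b-edge is (B,i,j).\<close>
lemma pred_succ_mod:
  assumes "i < m"
  shows "(Suc i mod m + m - 1) mod m = i"
proof (cases "Suc i < m")
  case True
  then show ?thesis by simp
next
  case False
  with assms have "Suc i = m" by simp
  then show ?thesis by simp
qed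

lemma realization_rows_orthogonal:
  assumes R: "is_realization m n r T"
    and generic: "leg_trace r \<noteq> 0" "leg_trace (rotate_legs r) \<noteq> 0"
      "leg_trace (rotate_legs (rotate_legs r)) \<noteq> 0"
    and ij: "i < m" "j < n"
  shows "rows_orthogonal (T d i j)"
proof -
  have det: "det2 (T d' i j) \<noteq> 0" for d'
    using R ij unfolding is_realization_def mat2_invertible_iff_det2 by blast
  have black: "parity_ok (tensor3_apply (T DA i j) (T DB i j) (T DC i j) r)"
    using R ij unfolding is_realization_def black_ok_def by blast
  have white: "\<exists>mv. parity_ok mv \<and> tensor3_apply (mat2_transpose (T DA i' j'))
      (mat2_transpose (T DB ((i' + m - 1) mod m) j'))
      (mat2_transpose (T DC i' ((j' + n - 1) mod n))) mv = r" if "i' < m" "j' < n" for i' j'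
    using R that unfolding is_realization_def white_ok_def by blast
  show ?thesis
  proof (cases d)
    case DA
    from white[OF ij] obtain mv where "parity_ok mv"
      "tensor3_apply (mat2_transpose (T DA i j)) (mat2_transpose (T DB ((i + m - 1) mod m) j))
         (mat2_transpose (T DC i ((j + n - 1) mod n))) mv = r" by blast
    from first_leg_rows_orthogonal[OF black this det det generic(1)] show ?thesis
      unfolding DA .
  next
    case DB
    have "Suc i mod m < m" using ij by simp
    from white[OF this ij(2)] obtain mv where "parity_ok mv"
      "tensor3_apply (mat2_transpose (T DA (Suc i mod m) j)) (mat2_transpose (T DB i j))
         (mat2_transpose (T DC (Suc i mod m) ((j + n - 1) mod n))) mv = r"
      unfolding pred_succ_mod[OF ij(1)] by blast
    from second_leg_rows_orthogonal[OF black this det det generic(3)] show ?thesis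
      unfolding DB .
  next
    case DC
    have "Suc j mod n < n" using ij by simp
    from white[OF ij(1) this] obtain mv where "parity_ok mv"
      "tensor3_apply (mat2_transpose (T DA i (Suc j mod n)))
         (mat2_transpose (T DB ((i + m - 1) mod m) (Suc j mod n))) (mat2_transpose (T DC i j)) mv = r"
      unfolding pred_succ_mod[OF ij(2)] by blast
    from third_leg_rows_orthogonal[OF black this det det generic(2)] show ?thesis
      unfolding DC .
  qed
qed

lemma realization_row_scale:
  assumes R: "is_realization m n r T"
    and w: "\<And>d i j x. i < m \<Longrightarrow> j < n \<Longrightarrow> w d i j x \<noteq> 0"
  shows "is_realization m n r (\<lambda>d i j. row_scale (w d i j) (T d i j))"
  unfolding is_realization_def
proof (intro conjI allI impI)
  fix d i j assume ij: "i < m" "j < n"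
  have "det2 (T d i j) \<noteq> 0"
    using R ij unfolding is_realization_def mat2_invertible_iff_det2 by blast
  then show "mat2_invertible (row_scale (w d i j) (T d i j))"
    unfolding mat2_invertible_iff_det2 det2_row_scale using w[OF ij] by simp
next
  fix i j assume ij: "i < m" "j < n"
  have "parity_ok (tensor3_apply (T DA i j) (T DB i j) (T DC i j) r)"
    using R ij unfolding is_realization_def black_ok_def by blast
  then show "black_ok (\<lambda>d i j. row_scale (w d i j) (T d i j)) r i j"
    unfolding black_ok_def tensor_row_scale by (rule parity_ok_scale)
  let ?i = "(i + m - 1) mod m" and ?j = "(j + n - 1) mod n"
  have nbr: "?i < m" "?j < n" using ij by auto
  obtain mv where mv: "parity_ok mv" "tensor3_apply (mat2_transpose (T DA i j))
      (mat2_transpose (T DB ?i j)) (mat2_transpose (T DC i ?j)) mv = r"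
    using R ij unfolding is_realization_def white_ok_def by blast
  text \<open>Compensate the rescaling by dividing the white signature by the weights.\<close>
  let ?mv = "\<lambda>x y z. (1 / (w DA i j x * w DB ?i j y * w DC i ?j z)) * mv x y z"
  have restored: "(\<lambda>x y z. w DA i j x * w DB ?i j y * w DC i ?j z * ?mv x y z) = mv"
    using w[OF ij] w[OF nbr(1) ij(2)] w[OF ij(1) nbr(2)] by (intro ext) simp
  have "parity_ok ?mv" by (rule parity_ok_scale[OF mv(1)])
  moreover have "tensor3_apply (mat2_transpose (row_scale (w DA i j) (T DA i j)))
      (mat2_transpose (row_scale (w DB ?i j) (T DB ?i j)))
      (mat2_transpose (row_scale (w DC i ?j) (T DC i ?j))) ?mv = r"
    unfolding tensor_transpose_row_scale restored by (rule mv(2))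
  ultimately show "white_ok m n (\<lambda>d i j. row_scale (w d i j) (T d i j)) r i j"
    unfolding white_ok_def by blast
qed

lemma generic_realization_orthogonalize:
  assumes R: "is_realization m n r T"
    and generic: "leg_trace r \<noteq> 0" "leg_trace (rotate_legs r) \<noteq> 0"
      "leg_trace (rotate_legs (rotate_legs r)) \<noteq> 0"
  shows "hex_orth_realizable m n r"
proof -
  define w where "w d i j x = 1 / csqrt (row_norm (T d i j) x)" for d i j x
  have det: "det2 (T d i j) \<noteq> 0" if "i < m" "j < n" for d i j
    using R that unfolding is_realization_def mat2_invertible_iff_det2 by blast
  note orth = realization_rows_orthogonal[OF R generic]
  have "is_realization m n r (\<lambda>d i j. row_scale (w d i j) (T d i j))"
    by (rule realization_row_scale[OF R]) (use row_norm_nonzero[OF det orth] in \<open>simp add: w_def\<close>)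
  moreover have "mat2_orthogonal (row_scale (w d i j) (T d i j))" if "i < m" "j < n" for d i j
    using normalize_rows_orthogonal[OF det orth] that unfolding normalize_rows_def w_def by blast
  ultimately show ?thesis unfolding hex_orth_realizable_def by blast
qed

subsection \<open>The genericity polynomial\<close>

definition generic_poly :: "sig3 \<Rightarrow> complex" where
  "generic_poly r = leg_trace r * leg_trace (rotate_legs r) * leg_trace (rotate_legs (rotate_legs r))"

text \<open>The leg form and its trace are polynomial in the entries of the signature, whenever these
  entries are themselves polynomial functions (as for rotated signatures).\<close>
lemma leg_form_polynomial:
  assumes g: "\<And>x y z. sig_polynomial (\<lambda>r. g r x y z)"
  shows "sig_polynomial (\<lambda>r. leg_form (g r) x x')"
proof -
  have "sig_polynomial (\<lambda>r. g r x y z * g r x' y' z' * symp y y' * symp z z')" for y y' z z'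
    by (intro sig_polynomial_mult g sig_polynomial_const)
  then show ?thesis unfolding leg_form_def by (intro sig_polynomial_sum finite_UNIV)
qed

lemma leg_trace_polynomial:
  assumes "\<And>x y z. sig_polynomial (\<lambda>r. g r x y z)"
  shows "sig_polynomial (\<lambda>r. leg_trace (g r))"
  unfolding leg_trace_def by (intro sig_polynomial_add leg_form_polynomial assms)

lemma generic_poly_polynomial: "sig_polynomial generic_poly"
proof -
  have rot: "sig_polynomial (\<lambda>r. rotate_legs r x y z)"
    and rot2: "sig_polynomial (\<lambda>r. rotate_legs (rotate_legs r) x y z)" for x y z
    unfolding rotate_legs_def by (rule sig_polynomial_entry)+
  show ?thesis
    unfolding generic_poly_def [abs_def]
    by (intro sig_polynomial_mult leg_trace_polynomial sig_polynomial_entry rot rot2)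
qed

lemma leg_trace_slices: "leg_trace s = 2 * (det2 (s False) + det2 (s True))"
  unfolding leg_trace_def leg_form_def det2_def by (simp add: UNIV_bool symp_def algebra_simps)

text \<open>The even signature with value 2 at 000 and 1 at the other even strings is generic: the
  traces on its three legs all equal 2 * (2 * 1 - 1 * 1).\<close>
lemma generic_poly_witness:
  "generic_poly (\<lambda>x y z. if \<not> x \<and> \<not> y \<and> \<not> z then 2 else if even (weight3 x y z) then 1 else 0) \<noteq> 0"
  unfolding generic_poly_def leg_trace_slices det2_def rotate_legs_def by (simp add: weight3_def)

lemma generic_poly_coefficients:
  "\<exists>c S. nonzero_sig_poly c S \<and> (\<forall>r. generic_poly r = sig_poly_eval c S r)"
  using generic_poly_polynomial generic_poly_witness by (rule sig_polynomial_nonzero)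

theorem theorem3p14:
  fixes m n :: nat
  assumes "m \<ge> 1" and "n \<ge> 1"
  shows "\<exists>c S. nonzero_sig_poly c S \<and>
           (\<forall>r :: sig3. sig_poly_eval c S r \<noteq> 0 \<longrightarrow>
              (hex_realizable m n r \<longleftrightarrow> hex_orth_realizable m n r))"
proof -
  obtain c S where poly: "nonzero_sig_poly c S" and eval: "\<forall>r. generic_poly r = sig_poly_eval c S r"
    using generic_poly_coefficients by blast
  have "hex_realizable m n r \<longleftrightarrow> hex_orth_realizable m n r" if "sig_poly_eval c S r \<noteq> 0" for r
  proof
    assume "hex_realizable m n r"
    then obtain T where R: "is_realization m n r T" unfolding hex_realizable_def by blast
    have "generic_poly r \<noteq> 0" using that eval by simp
    then have "leg_trace r \<noteq> 0" "leg_trace (rotate_legs r) \<noteq> 0"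
      "leg_trace (rotate_legs (rotate_legs r)) \<noteq> 0"
      unfolding generic_poly_def by auto
    with R show "hex_orth_realizable m n r" by (rule generic_realization_orthogonalize)
  next
    assume "hex_orth_realizable m n r"
    then show "hex_realizable m n r"
      unfolding hex_orth_realizable_def hex_realizable_def by blast
  qed
  with poly show ?thesis by blast
qed

end
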